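(* Let $\kappa$ be a regular uncountable cardinal with $\kappa^{<\kappa}=\kappa$ and $\gamma^\omega<\kappa$ for all $\gamma<\kappa$, and let $I$ be the linear order described in the context. Then $I$ is $(\kappa,bs,bs)$-nice.
   Context: $I^0$: order $\kappa\times\mathbb Q$ lexicographically; $I^0$ is the set of $f:\omega\to\kappa\times\mathbb Q$, $f(n)=(f_1(n),f_2(n))$, with $\{n\mid f_1(n)\ne0\}$ finite, ordered by comparing at the least $n$ where they differ. Construct $I^0\subseteq I^1\subseteq\dots$ ($i<\kappa$): given $I^i$, for each $\nu\in I^i$ add a new element $\nu^{i+1}$ with $\nu^{i+1}<\nu$ and, for all $\tau\in I^i\setminus\{\nu\}$, $\tau<\nu^{i+1}$ iff $\tau<\nu$ (for distinct $\nu,\mu$, $\nu^{i+1}<\mu^{i+1}$ iff $\nu<\mu$); $I^{i+1}=I^i\cup\{\nu^{i+1}\mid\nu\in I^i\}$; unions at limits; $I=\bigcup_{i<\kappa}I^i$. Types: $tp_{bs}(a,B,A)$ is the set of atomic and negated atomic formulas (in $\{<\}$) with parameters in $B$ true of $a$. A $\kappa$-representation of $A$ is an increasing continuous sequence $\langle A_\alpha\mid\alpha<\kappa\rangle$ of subsets of size $<\kappa$ with union $A$. $tp_{bs}(a,B,A)$ $(bs,bs)$-splits over $D$ if there are $b_1,b_2\in B$ with $tp_{bs}(b_1,D,A)=tp_{bs}(b_2,D,A)$ but $tp_{bs}(a^\frown b_1,D,A)\ne tp_{bs}(a^\frown b_2,D,A)$. $Sp_{bs}(\mathbb A)$ is the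 set of limit $\delta<\kappa$ such that some $a\in A$ has $tp_{bs}(a,A_\delta,A)$ $(bs,bs)$-splitting over $A_\beta$ for all $\beta<\delta$. $A$ is $(\kappa,bs,bs)$-nice if $Sp_{bs}(\mathbb A)$ is non-stationary for a (equivalently every) $\kappa$-representation $\mathbb A$ of $A$. *)

theory Defs
  imports Complex_Main "HOL-Library.Cardinality"
begin

unbundle cardinal_syntax

section \<open>Ordinals below kappa, represented by a cardinal well-order r on a type 'k\<close>

definition ordlt :: "'k rel \<Rightarrow> 'k \<Rightarrow> 'k \<Rightarrow> bool" where
  "ordlt r a b \<longleftrightarrow> (a, b) \<in> r \<and> a \<noteq> b"

definition kzero :: "'k rel \<Rightarrow> 'k" where
  "kzero r = (THE z. \<forall>a. (z, a) \<in> r)"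

definition ksucc :: "'k rel \<Rightarrow> 'k \<Rightarrow> 'k" where
  "ksucc r i = (THE j. ordlt r i j \<and> (\<forall>k. ordlt r i k \<longrightarrow> (j, k) \<in> r))"

definition isLimit :: "'k rel \<Rightarrow> 'k \<Rightarrow> bool" where
  "isLimit r \<delta> \<longleftrightarrow> \<delta> \<noteq> kzero r \<and>
     (\<forall>\<beta>. ordlt r \<beta> \<delta> \<longrightarrow> (\<exists>\<gamma>. ordlt r \<beta> \<gamma> \<and> ordlt r \<gamma> \<delta>))"

definition club :: "'k rel \<Rightarrow> 'k set \<Rightarrow> bool" where
  "club r C \<longleftrightarrow> (\<forall>\<alpha>. \<exists>\<gamma>\<in>C. ordlt r \<alpha> \<gamma>) \<and>
     (\<forall>\<delta>. isLimit r \<delta> \<and> (\<forall>\<beta>. ordlt r \<beta> \<delta> \<longrightarrow> (\<exists>\<gamma>\<in>C. ordlt r \<beta> \<gamma> \<and> ordlt r \<gamma> \<delta>))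
           \<longrightarrow> \<delta> \<in> C)"

definition stationary :: "'k rel \<Rightarrow> 'k set \<Rightarrow> bool" where
  "stationary r S \<longleftrightarrow> (\<forall>C. club r C \<longrightarrow> S \<inter> C \<noteq> {})"

definition lex_kq :: "'k rel \<Rightarrow> 'k \<times> rat \<Rightarrow> 'k \<times> rat \<Rightarrow> bool" where
  "lex_kq r x y \<longleftrightarrow> ordlt r (fst x) (fst y) \<or> (fst x = fst y \<and> snd x < snd y)"

definition base_set :: "'k rel \<Rightarrow> (nat \<Rightarrow> 'k \<times> rat) set" where
  "base_set r = {f. finite {n. fst (f n) \<noteq> kzero r}}"

definition base_lt :: "'k rel \<Rightarrow> (nat \<Rightarrow> 'k \<times> rat) \<Rightarrow> (nat \<Rightarrow> 'k \<times> rat) \<Rightarrow> bool" where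
  "base_lt r f g \<longleftrightarrow> (\<exists>n. (\<forall>m<n. f m = g m) \<and> f n \<noteq> g n \<and> lex_kq r (f n) (g n))"

datatype 'a tm = Var nat | Par 'a
datatype 'a atom = Less "'a tm" "'a tm" | Equal "'a tm" "'a tm"
datatype 'a lit = Pos "'a atom" | Neg "'a atom"

fun tm_val :: "'a list \<Rightarrow> 'a tm \<Rightarrow> 'a" where
  "tm_val as (Var n) = as ! n"
| "tm_val as (Par p) = p"

fun tm_ok :: "nat \<Rightarrow> 'a set \<Rightarrow> 'a tm \<Rightarrow> bool" where
  "tm_ok k B (Var n) \<longleftrightarrow> n < k"
| "tm_ok k B (Par p) \<longleftrightarrow> p \<in> B"

fun atom_ok :: "nat \<Rightarrow> 'a set \<Rightarrow> 'a atom \<Rightarrow> bool" where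
  "atom_ok k B (Less t u) \<longleftrightarrow> tm_ok k B t \<and> tm_ok k B u"
| "atom_ok k B (Equal t u) \<longleftrightarrow> tm_ok k B t \<and> tm_ok k B u"

fun atom_holds :: "('a \<Rightarrow> 'a \<Rightarrow> bool) \<Rightarrow> 'a list \<Rightarrow> 'a atom \<Rightarrow> bool" where
  "atom_holds lt as (Less t u) \<longleftrightarrow> lt (tm_val as t) (tm_val as u)"
| "atom_holds lt as (Equal t u) \<longleftrightarrow> tm_val as t = tm_val as u"

definition tp_bs :: "('a \<Rightarrow> 'a \<Rightarrow> bool) \<Rightarrow> 'a list \<Rightarrow> 'a set \<Rightarrow> 'a lit set" where
  "tp_bs lt as B =
     {Pos \<phi> | \<phi>. atom_ok (length as) B \<phi> \<and> atom_holds lt as \<phi>} \<union>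
     {Neg \<phi> | \<phi>. atom_ok (length as) B \<phi> \<and> \<not> atom_holds lt as \<phi>}"

definition bs_splits :: "('a \<Rightarrow> 'a \<Rightarrow> bool) \<Rightarrow> 'a \<Rightarrow> 'a set \<Rightarrow> 'a set \<Rightarrow> bool" where
  "bs_splits lt a B D \<longleftrightarrow> (\<exists>b1\<in>B. \<exists>b2\<in>B.
      tp_bs lt [b1] D = tp_bs lt [b2] D \<and> tp_bs lt [a, b1] D \<noteq> tp_bs lt [a, b2] D)"

definition kappa_rep :: "'k rel \<Rightarrow> 'a set \<Rightarrow> ('k \<Rightarrow> 'a set) \<Rightarrow> bool" where
  "kappa_rep r A As \<longleftrightarrow>
     (\<forall>\<alpha> \<beta>. (\<alpha>, \<beta>) \<in> r \<longrightarrow> As \<alpha> \<subseteq> As \<beta>) \<and>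
     (\<forall>\<delta>. isLimit r \<delta> \<longrightarrow> As \<delta> = (\<Union>\<beta>\<in>{\<beta>. ordlt r \<beta> \<delta>}. As \<beta>)) \<and>
     (\<forall>\<alpha>. |As \<alpha>| <o r) \<and>
     (\<Union>\<alpha>. As \<alpha>) = A"

definition Sp_bs :: "'k rel \<Rightarrow> ('a \<Rightarrow> 'a \<Rightarrow> bool) \<Rightarrow> 'a set \<Rightarrow> ('k \<Rightarrow> 'a set) \<Rightarrow> 'k set" where
  "Sp_bs r lt A As = {\<delta>. isLimit r \<delta> \<and>
      (\<exists>a\<in>A. \<forall>\<beta>. ordlt r \<beta> \<delta> \<longrightarrow> bs_splits lt a (As \<delta>) (As \<beta>))}"

text \<open>(kappa,bs,bs)-nice: Sp_bs is non-stationary for every kappa-representation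
  (the paper notes "a" and "every" are equivalent; we use "every").\<close>
definition nice :: "'k rel \<Rightarrow> ('a \<Rightarrow> 'a \<Rightarrow> bool) \<Rightarrow> 'a set \<Rightarrow> bool" where
  "nice r lt A \<longleftrightarrow> (\<forall>As. kappa_rep r A As \<longrightarrow> \<not> stationary r (Sp_bs r lt A As))"

end

theory Submission
  imports Defs "HOL-Library.Countable_Set"
begin

text \<open>
  Every element of I arises from a unique root f in I^0 by finitely many steps nu |-> nu^(i+1),
  and each step puts the new element directly below its parent, relative to the current stage.
  Hence elements with different roots are ordered as their roots are, and an element a outside a
  stage I^d realizes over I^d the cut of its ancestor p in I^d, except that a < p.

  Let J_d consist of the elements of I^d whose root has all coordinates below d; since
  gamma^omega < kappa, J is a kappa-representation of I. Fix a limit d and an element a. If a is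
  in J_d, it is already in some J_b with b < d. If a is not in J_d but its root has all
  coordinates below d, the ancestor p of a in I^d lies in some J_b and separates a from every
  element of J_d above a. Otherwise some coordinate of the root f of a is at least d; the root of
  every element of J_d above a differs from f at an earlier coordinate, so some element of I^0
  strictly between the two roots lies in some J_b and again separates.
  In each case a does not split over J_b. Finally, any two kappa-representations interleave on
  a club, and splitting over a set implies splitting over its subsets, so Sp_bs is
  non-stationary for every representation.
\<close>

section \<open>Splitting of quantifier-free types\<close>

definition same_1type :: "('a \<Rightarrow> 'a \<Rightarrow> bool) \<Rightarrow> 'a \<Rightarrow> 'a \<Rightarrow> 'a set \<Rightarrow> bool" where
  "same_1type lt b1 b2 X \<longleftrightarrow> (lt b1 b1 \<longleftrightarrow> lt b2 b2) \<and>
     (\<forall>c\<in>X. (lt b1 c \<longleftrightarrow> lt b2 c) \<and> (lt c b1 \<longleftrightarrow> lt c b2) \<and> (b1 = c \<longleftrightarrow> b2 = c))"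

lemma tp_bs_eq_iff:
  assumes "length as = length bs"
  shows "tp_bs lt as X = tp_bs lt bs X \<longleftrightarrow>
    (\<forall>\<phi>. atom_ok (length as) X \<phi> \<longrightarrow> atom_holds lt as \<phi> = atom_holds lt bs \<phi>)"
proof
  assume eq: "tp_bs lt as X = tp_bs lt bs X"
  show "\<forall>\<phi>. atom_ok (length as) X \<phi> \<longrightarrow> atom_holds lt as \<phi> = atom_holds lt bs \<phi>"
  proof (intro allI impI)
    fix \<phi> assume "atom_ok (length as) X \<phi>"
    then have "Pos \<phi> \<in> tp_bs lt as X \<longleftrightarrow> atom_holds lt as \<phi>"
      and "Pos \<phi> \<in> tp_bs lt bs X \<longleftrightarrow> atom_holds lt bs \<phi>"
      using assms by (auto simp: tp_bs_def)
    then show "atom_holds lt as \<phi> = atom_holds lt bs \<phi>" using eq by simp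
  qed
qed (use assms in \<open>auto simp: tp_bs_def\<close>)

lemma atom_holds_same_1type:
  assumes s: "same_1type lt b1 b2 Y"
    and val: "\<And>t. tm_ok k X t \<Longrightarrow> (tm_val as1 t = b1 \<and> tm_val as2 t = b2) \<or>
        (\<exists>c\<in>Y. tm_val as1 t = c \<and> tm_val as2 t = c)"
    and ok: "atom_ok k X \<phi>"
  shows "atom_holds lt as1 \<phi> = atom_holds lt as2 \<phi>"
proof -
  have sb: "lt b1 b1 = lt b2 b2"
    and sc: "\<And>c. c \<in> Y \<Longrightarrow> lt b1 c = lt b2 c" "\<And>c. c \<in> Y \<Longrightarrow> lt c b1 = lt c b2"
      "\<And>c. c \<in> Y \<Longrightarrow> (b1 = c) = (b2 = c)" "\<And>c. c \<in> Y \<Longrightarrow> (c = b1) = (c = b2)"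
    using s unfolding same_1type_def by auto
  show ?thesis
  proof (cases \<phi>)
    case (Less t u)
    with ok have "tm_ok k X t" "tm_ok k X u" by simp_all
    from val[OF this(1)] val[OF this(2)] show ?thesis
      unfolding Less by (elim disjE bexE conjE) (simp_all add: sb sc)
  next
    case (Equal t u)
    with ok have "tm_ok k X t" "tm_ok k X u" by simp_all
    from val[OF this(1)] val[OF this(2)] show ?thesis
      unfolding Equal by (elim disjE bexE conjE) (simp_all add: sc)
  qed
qed

lemma tp_bs_single_eq_iff: "tp_bs lt [b1] X = tp_bs lt [b2] X \<longleftrightarrow> same_1type lt b1 b2 X"
proof -
  have "(\<forall>\<phi>. atom_ok 1 X \<phi> \<longrightarrow> atom_holds lt [b1] \<phi> = atom_holds lt [b2] \<phi>) \<longleftrightarrow> same_1type lt b1 b2 X"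
  proof
    assume h: "\<forall>\<phi>. atom_ok 1 X \<phi> \<longrightarrow> atom_holds lt [b1] \<phi> = atom_holds lt [b2] \<phi>"
    show "same_1type lt b1 b2 X"
      unfolding same_1type_def
      using h[rule_format, of "Less (Var 0) (Var 0)"] h[rule_format, of "Less (Var 0) (Par _)"]
        h[rule_format, of "Less (Par _) (Var 0)"] h[rule_format, of "Equal (Var 0) (Par _)"]
      by auto
  next
    assume s: "same_1type lt b1 b2 X"
    have "(tm_val [b1] t = b1 \<and> tm_val [b2] t = b2) \<or> (\<exists>c\<in>X. tm_val [b1] t = c \<and> tm_val [b2] t = c)"
      if "tm_ok 1 X t" for t
      using that by (cases t) auto
    then show "\<forall>\<phi>. atom_ok 1 X \<phi> \<longrightarrow> atom_holds lt [b1] \<phi> = atom_holds lt [b2] \<phi>"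
      using atom_holds_same_1type[OF s] by blast
  qed
  then show ?thesis using tp_bs_eq_iff[of "[b1]" "[b2]"] by simp
qed

lemma tp_bs_pair_eq_iff:
  "tp_bs lt [a, b1] X = tp_bs lt [a, b2] X \<longleftrightarrow> same_1type lt b1 b2 (insert a X)"
proof -
  have "(\<forall>\<phi>. atom_ok 2 X \<phi> \<longrightarrow> atom_holds lt [a, b1] \<phi> = atom_holds lt [a, b2] \<phi>) \<longleftrightarrow>
    same_1type lt b1 b2 (insert a X)"
  proof
    assume h: "\<forall>\<phi>. atom_ok 2 X \<phi> \<longrightarrow> atom_holds lt [a, b1] \<phi> = atom_holds lt [a, b2] \<phi>"
    show "same_1type lt b1 b2 (insert a X)"
      unfolding same_1type_def
    proof (intro conjI ballI)
      show "lt b1 b1 = lt b2 b2" using h[rule_format, of "Less (Var 1) (Var 1)"] by simp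
      fix c assume "c \<in> insert a X"
      then obtain t where t: "tm_ok 2 X t" "\<And>b. tm_val [a, b] t = c"
      proof (cases "c = a")
        case True
        then show ?thesis using that[of "Var 0"] by simp
      next
        case False
        then show ?thesis using that[of "Par c"] \<open>c \<in> insert a X\<close> by simp
      qed
      show "lt b1 c = lt b2 c" using h[rule_format, of "Less (Var 1) t"] t by simp
      show "lt c b1 = lt c b2" using h[rule_format, of "Less t (Var 1)"] t by simp
      show "(b1 = c) = (b2 = c)" using h[rule_format, of "Equal (Var 1) t"] t by simp
    qed
  next
    assume s: "same_1type lt b1 b2 (insert a X)"
    have "(tm_val [a, b1] t = b1 \<and> tm_val [a, b2] t = b2) \<or>
        (\<exists>c\<in>insert a X. tm_val [a, b1] t = c \<and> tm_val [a, b2] t = c)"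
      if "tm_ok 2 X t" for t
    proof (cases t)
      case (Var n)
      with that have "n = 0 \<or> n = 1" by auto
      then show ?thesis using Var by auto
    qed (use that in auto)
    then show "\<forall>\<phi>. atom_ok 2 X \<phi> \<longrightarrow> atom_holds lt [a, b1] \<phi> = atom_holds lt [a, b2] \<phi>"
      using atom_holds_same_1type[OF s] by blast
  qed
  then show ?thesis using tp_bs_eq_iff[of "[a, b1]" "[a, b2]"] by (simp add: numeral_2_eq_2)
qed

lemma same_1type_insert:
  "same_1type lt b1 b2 (insert a X) \<longleftrightarrow> same_1type lt b1 b2 X \<and> same_1type lt b1 b2 {a}"
  by (auto simp: same_1type_def)

lemma same_1type_mono: "same_1type lt b1 b2 Y \<Longrightarrow> X \<subseteq> Y \<Longrightarrow> same_1type lt b1 b2 X"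
  unfolding same_1type_def by blast

lemma same_1type_sym: "same_1type lt b1 b2 X \<Longrightarrow> same_1type lt b2 b1 X"
  by (auto simp: same_1type_def)

lemma bs_splits_iff:
  "bs_splits lt a B X \<longleftrightarrow>
     (\<exists>b1\<in>B. \<exists>b2\<in>B. same_1type lt b1 b2 X \<and> \<not> same_1type lt b1 b2 {a})"
proof -
  have "(tp_bs lt [b1] X = tp_bs lt [b2] X \<and> tp_bs lt [a, b1] X \<noteq> tp_bs lt [a, b2] X) \<longleftrightarrow>
      same_1type lt b1 b2 X \<and> \<not> same_1type lt b1 b2 {a}" for b1 b2
    unfolding tp_bs_single_eq_iff tp_bs_pair_eq_iff same_1type_insert[of lt b1 b2 a X] by blast
  then show ?thesis unfolding bs_splits_def by simp
qed

lemma bs_splits_antimono: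
  assumes "bs_splits lt a B Y" "X \<subseteq> Y"
  shows "bs_splits lt a B X"
proof -
  obtain b1 b2 where "b1 \<in> B" "b2 \<in> B" "same_1type lt b1 b2 Y" "\<not> same_1type lt b1 b2 {a}"
    using assms(1) unfolding bs_splits_iff by blast
  moreover have "same_1type lt b1 b2 X" using same_1type_mono \<open>same_1type lt b1 b2 Y\<close> assms(2) .
  ultimately show ?thesis unfolding bs_splits_iff by blast
qed

lemma not_bs_splits_if_mem:
  assumes "a \<in> X"
  shows "\<not> bs_splits lt a B X"
proof
  assume "bs_splits lt a B X"
  then obtain b1 b2 where "same_1type lt b1 b2 X" "\<not> same_1type lt b1 b2 {a}"
    unfolding bs_splits_iff by blast
  moreover have "{a} \<subseteq> X" using assms by simp
  ultimately show False using same_1type_mono[of lt b1 b2 X "{a}"] by simp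
qed

text \<open>In a linear order, a splits over X only if it lies strictly between two elements of B
  that realize the same cut of X.\<close>

lemma not_bs_splits_if_separated:
  assumes lin: "\<forall>x\<in>U. \<forall>y\<in>U. \<forall>z\<in>U.
      \<not> lt x x \<and> (lt x y \<and> lt y z \<longrightarrow> lt x z) \<and> (lt x y \<or> x = y \<or> lt y x)"
    and U: "a \<in> U" "B \<subseteq> U" "X \<subseteq> U" and "a \<notin> B"
    and sep: "\<forall>b\<in>B. lt a b \<longrightarrow> (\<exists>c\<in>X. lt a c \<and> (lt c b \<or> c = b))"
  shows "\<not> bs_splits lt a B X"
proof
  have irr: "\<And>x. x \<in> U \<Longrightarrow> \<not> lt x x"
    and tr: "\<And>x y z. x \<in> U \<Longrightarrow> y \<in> U \<Longrightarrow> z \<in> U \<Longrightarrow> lt x y \<Longrightarrow> lt y z \<Longrightarrow> lt x z"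
    and tot: "\<And>x y. x \<in> U \<Longrightarrow> y \<in> U \<Longrightarrow> lt x y \<or> x = y \<or> lt y x"
    using lin by blast+
  have B: "b \<in> U" "a \<noteq> b" "\<not> lt b b" "lt b a \<longleftrightarrow> \<not> lt a b" if "b \<in> B" for b
  proof -
    show "b \<in> U" "a \<noteq> b" using that U(2) \<open>a \<notin> B\<close> by auto
    then show "\<not> lt b b" "lt b a \<longleftrightarrow> \<not> lt a b" using irr tr[of a b a] tot[of a b] U(1) by blast+
  qed
  have above_below: False
    if b: "b1 \<in> B" "b2 \<in> B" "same_1type lt b1 b2 X" "lt a b1" "\<not> lt a b2" for b1 b2
  proof -
    obtain c where c: "c \<in> X" "lt a c" "lt c b1 \<or> c = b1" using sep b(1,4) by blast
    have "c \<in> U" "b2 \<in> U" using c(1) U(3) B(1)[OF b(2)] by blast+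
    have "lt b2 c" using tr[OF \<open>b2 \<in> U\<close> U(1) \<open>c \<in> U\<close> _ c(2)] B(4)[OF b(2)] b(5) by blast
    moreover have "lt c b2 \<or> c = b2" using b(3) c unfolding same_1type_def by blast
    ultimately show False using tr[OF \<open>b2 \<in> U\<close> \<open>c \<in> U\<close> \<open>b2 \<in> U\<close>] irr \<open>b2 \<in> U\<close> by blast
  qed
  assume "bs_splits lt a B X"
  then obtain b1 b2 where b: "b1 \<in> B" "b2 \<in> B" "same_1type lt b1 b2 X"
    and "\<not> same_1type lt b1 b2 {a}"
    unfolding bs_splits_iff by blast
  then have "lt a b1 \<noteq> lt a b2" using B[OF b(1)] B[OF b(2)] unfolding same_1type_def by auto
  then show False using above_below b same_1type_sym by metis
qed

section \<open>Ordinals below a regular uncountable cardinal\<close>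

locale uncountable_regular =
  fixes r :: "'k rel"
  assumes card: "card_order r"
    and regular: "regularCard r"
    and uncountable: "natLeq <o r"
begin

lemma Field_r [simp]: "Field r = UNIV"
  using card card_order_on_Card_order by blast

lemma Card_order_r: "Card_order r"
  using card card_order_on_Card_order by blast

lemma Well_order_r: "Well_order r"
  using Card_order_r card_order_on_well_order_on by blast

lemma r_refl [simp]: "(a, a) \<in> r"
  using Well_order_r
  unfolding well_order_on_def linear_order_on_def partial_order_on_def preorder_on_def refl_on_def
  by simp

lemma r_total: "(a, b) \<in> r \<or> (b, a) \<in> r"
  using Well_order_r unfolding well_order_on_def linear_order_on_def total_on_def
  by (metis Field_r UNIV_I r_refl)

lemma r_antisym: "(a, b) \<in> r \<Longrightarrow> (b, a) \<in> r \<Longrightarrow> a = b"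
  using Well_order_r
  unfolding well_order_on_def linear_order_on_def partial_order_on_def antisym_def by blast

lemma r_trans: "(a, b) \<in> r \<Longrightarrow> (b, c) \<in> r \<Longrightarrow> (a, c) \<in> r"
  using Well_order_r
  unfolding well_order_on_def linear_order_on_def partial_order_on_def preorder_on_def trans_def
  by blast

lemma ordlt_irrefl [simp]: "\<not> ordlt r a a"
  by (simp add: ordlt_def)

lemma ordlt_imp_r: "ordlt r a b \<Longrightarrow> (a, b) \<in> r"
  by (simp add: ordlt_def)

lemma ordlt_trans: "ordlt r a b \<Longrightarrow> ordlt r b c \<Longrightarrow> ordlt r a c"
  unfolding ordlt_def using r_trans r_antisym by blast

lemma r_ordlt_trans: "(a, b) \<in> r \<Longrightarrow> ordlt r b c \<Longrightarrow> ordlt r a c"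
  unfolding ordlt_def using r_trans r_antisym by blast

lemma ordlt_r_trans: "ordlt r a b \<Longrightarrow> (b, c) \<in> r \<Longrightarrow> ordlt r a c"
  unfolding ordlt_def using r_trans r_antisym by blast

lemma not_ordlt: "\<not> ordlt r a b \<longleftrightarrow> (b, a) \<in> r"
  unfolding ordlt_def using r_total r_antisym by blast

lemma ordlt_trichotomy: "ordlt r a b \<or> a = b \<or> ordlt r b a"
  unfolding ordlt_def using r_total by blast

lemma wf_ordlt: "wf {(a, b). ordlt r a b}"
proof -
  have "wf (r - Id)" using Well_order_r wo_rel.WF wo_rel_def by blast
  moreover have "{(a, b). ordlt r a b} = r - Id" unfolding ordlt_def by auto
  ultimately show ?thesis by simp
qed

lemma ex_least:
  assumes "x \<in> S"
  shows "\<exists>z\<in>S. \<forall>y\<in>S. (z, y) \<in> r"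
proof -
  obtain z where "z \<in> S" "\<And>y. (y, z) \<in> {(a, b). ordlt r a b} \<Longrightarrow> y \<notin> S"
    using wfE_min[OF wf_ordlt assms] by metis
  then show ?thesis using not_ordlt by blast
qed

lemma infinite_UNIV: "infinite (UNIV :: 'k set)"
proof
  assume "finite (UNIV :: 'k set)"
  then have "finite (Field r)" by simp
  then have "\<not> natLeq \<le>o |Field r|" using infinite_iff_natLeq_ordLeq by blast
  moreover have "r =o |Field r|"
    using card_of_Field_ordIso[OF Card_order_r] ordIso_symmetric by blast
  ultimately show False
    using uncountable by (meson ordIso_iff_ordLeq ordLeq_transitive ordLess_imp_ordLeq)
qed

lemma finite_ordLess: "finite K \<Longrightarrow> |K| <o r"
  using finite_ordLess_infinite[OF card_of_Well_order Well_order_r] infinite_UNIV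
  by (simp add: Field_card_of)

lemma countable_ordLess: "countable K \<Longrightarrow> |K| <o r"
proof -
  assume "countable K"
  then obtain f :: "_ \<Rightarrow> nat" where "inj_on f K" unfolding countable_def by blast
  then have "|K| \<le>o |UNIV :: nat set|" using card_of_ordLeq[of K "UNIV :: nat set"] by blast
  moreover have "|UNIV :: nat set| <o r" using ordIso_ordLess_trans[OF card_of_nat uncountable] .
  ultimately show ?thesis using ordLeq_ordLess_trans by blast
qed

lemma small_Un: "|A| <o r \<Longrightarrow> |B| <o r \<Longrightarrow> |A \<union> B| <o r"
  using card_of_Un_ordLess_infinite_Field[of r A B] Card_order_r infinite_UNIV by simp

lemma small_bounded:
  assumes "|K| <o r"
  shows "\<exists>b. \<forall>k\<in>K. (k, b) \<in> r"
proof (rule ccontr)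
  assume "\<nexists>b. \<forall>k\<in>K. (k, b) \<in> r"
  then have "cofinal K r" unfolding cofinal_def using not_ordlt unfolding ordlt_def by blast
  then have "|K| =o r" using regular unfolding regularCard_def by simp
  then show False using assms not_ordLess_ordIso by blast
qed

lemma card_of_under_ordLess: "|{b. (b, a) \<in> r}| <o r"
proof -
  have "{b. (b, a) \<in> r} = underS r a \<union> {a}" unfolding underS_def by auto
  moreover have "|underS r a| <o r" using card_of_underS[OF Card_order_r] by simp
  ultimately show ?thesis using small_Un[of "underS r a" "{a}"] finite_ordLess[of "{a}"] by simp
qed

lemma ex_ordlt: "\<exists>b. ordlt r a b"
proof (rule ccontr)
  assume "\<nexists>b. ordlt r a b"
  then have "{b. (b, a) \<in> r} = UNIV" using not_ordlt by blast
  then have "|UNIV :: 'k set| <o r" using card_of_under_ordLess[of a] by simp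
  moreover have "|UNIV :: 'k set| =o r" using card_of_Field_ordIso[OF Card_order_r] by simp
  ultimately show False using not_ordLess_ordIso by blast
qed

lemma small_strictly_bounded:
  assumes "|K| <o r"
  shows "\<exists>b. \<forall>k\<in>K. ordlt r k b"
proof -
  obtain b where "\<forall>k\<in>K. (k, b) \<in> r" using small_bounded assms by blast
  moreover obtain c where "ordlt r b c" using ex_ordlt by blast
  ultimately show ?thesis using r_ordlt_trans by blast
qed

lemma small_has_sup:
  assumes "|K| <o r"
  shows "\<exists>\<delta>. (\<forall>k\<in>K. (k, \<delta>) \<in> r) \<and> (\<forall>b. ordlt r b \<delta> \<longrightarrow> (\<exists>k\<in>K. ordlt r b k))"
proof -
  obtain u where "u \<in> {u. \<forall>k\<in>K. (k, u) \<in> r}" using small_bounded assms by blast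
  then obtain \<delta> where "\<delta> \<in> {u. \<forall>k\<in>K. (k, u) \<in> r}" "\<forall>u\<in>{u. \<forall>k\<in>K. (k, u) \<in> r}. (\<delta>, u) \<in> r"
    using ex_least[of u "{u. \<forall>k\<in>K. (k, u) \<in> r}"] by blast
  then show ?thesis using not_ordlt by blast
qed

lemma small_subset_mono_family:
  assumes mono: "\<And>i j. (i, j) \<in> r \<Longrightarrow> E i \<subseteq> E j"
    and "S \<subseteq> (\<Union>i. E i)" and "|S| <o r"
  shows "\<exists>g. S \<subseteq> E g"
proof -
  have "\<forall>x\<in>S. \<exists>i. x \<in> E i" using assms(2) by blast
  then obtain h where h: "\<forall>x\<in>S. x \<in> E (h x)" by metis
  have "|h ` S| <o r" using card_of_image \<open>|S| <o r\<close> ordLeq_ordLess_trans by blast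
  then obtain b where "\<forall>k\<in>h ` S. (k, b) \<in> r" using small_bounded by blast
  then have "S \<subseteq> E b" using h mono by blast
  then show ?thesis by blast
qed

lemma kzero_least: "(kzero r, a) \<in> r"
proof -
  obtain z where z: "\<forall>a. (z, a) \<in> r" using ex_least[of undefined UNIV] by blast
  have "kzero r = z" unfolding kzero_def by (rule the_equality) (use z r_antisym in blast)+
  then show ?thesis using z by simp
qed

lemma ksucc:
  shows ordlt_ksucc: "ordlt r i (ksucc r i)"
    and ksucc_least: "ordlt r i k \<Longrightarrow> (ksucc r i, k) \<in> r"
proof -
  obtain b where "ordlt r i b" using ex_ordlt by blast
  then obtain z where z: "ordlt r i z" "\<forall>k. ordlt r i k \<longrightarrow> (z, k) \<in> r"
    using ex_least[of b "{k. ordlt r i k}"] by blast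
  then have "ksucc r i = z" unfolding ksucc_def using r_antisym by (intro the_equality) blast+
  then show "ordlt r i (ksucc r i)" "ordlt r i k \<Longrightarrow> (ksucc r i, k) \<in> r" using z by auto
qed

lemma ordlt_ksuccD: "ordlt r i (ksucc r j) \<Longrightarrow> (i, j) \<in> r"
  using ksucc_least not_ordlt ordlt_ksucc ordlt_r_trans by blast

lemma kzero_ordlt_limit: "isLimit r d \<Longrightarrow> ordlt r (kzero r) d"
  unfolding isLimit_def ordlt_def using kzero_least by blast

lemma zero_succ_limit_cases: "i = kzero r \<or> (\<exists>j. i = ksucc r j) \<or> isLimit r i"
proof (cases "i = kzero r \<or> isLimit r i")
  case False
  then obtain b where b: "ordlt r b i" "\<nexists>c. ordlt r b c \<and> ordlt r c i"
    unfolding isLimit_def by blast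
  then have "\<not> ordlt r (ksucc r b) i" using ordlt_ksucc by blast
  then have "ksucc r b = i" using ksucc_least[OF b(1)] not_ordlt r_antisym by blast
  then show ?thesis by blast
qed blast

lemma transfinite_induct [case_names zero succ limit]:
  assumes "P (kzero r)" "\<And>j. P j \<Longrightarrow> P (ksucc r j)"
    and "\<And>d. isLimit r d \<Longrightarrow> (\<And>i. ordlt r i d \<Longrightarrow> P i) \<Longrightarrow> P d"
  shows "P i"
  using wf_ordlt
proof (induct i rule: wf_induct_rule)
  case (less x)
  then show ?case using zero_succ_limit_cases[of x] assms ordlt_ksucc by auto
qed

lemma finite_bounded_below_limit:
  assumes "finite K" "isLimit r d" "\<forall>k\<in>K. ordlt r k d"
  shows "\<exists>b. ordlt r b d \<and> (\<forall>k\<in>K. ordlt r k b)"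
  using assms
proof (induct K rule: finite_induct)
  case empty
  then show ?case using kzero_ordlt_limit by blast
next
  case (insert x F)
  then obtain b where b: "ordlt r b d" "\<forall>k\<in>F. ordlt r k b" by auto
  define m where "m = (if ordlt r b x then x else b)"
  have "ordlt r m d" "(x, m) \<in> r" "(b, m) \<in> r"
    using b insert not_ordlt ordlt_imp_r unfolding m_def by auto
  moreover obtain c where "ordlt r m c" "ordlt r c d"
    using \<open>ordlt r m d\<close> insert(4) unfolding isLimit_def by blast
  ultimately have "ordlt r x c" "\<forall>k\<in>F. ordlt r k c"
    using b(2) r_ordlt_trans ordlt_trans by blast+
  then show ?case using \<open>ordlt r c d\<close> by blast
qed

lemma club_closure_points: "club r {d. \<forall>b. ordlt r b d \<longrightarrow> ordlt r (F b) d}"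
  (is "club r ?C")
proof -
  have "\<exists>c. ordlt r g c \<and> (\<forall>b. (b, g) \<in> r \<longrightarrow> ordlt r (F b) c)" for g
  proof -
    have "|F ` {b. (b, g) \<in> r}| <o r"
      using card_of_under_ordLess card_of_image ordLeq_ordLess_trans by blast
    then have "|{g} \<union> F ` {b. (b, g) \<in> r}| <o r" using small_Un finite_ordLess[of "{g}"] by blast
    then obtain c where "\<forall>k\<in>{g} \<union> F ` {b. (b, g) \<in> r}. ordlt r k c"
      using small_strictly_bounded by blast
    then show ?thesis by blast
  qed
  then obtain h where h: "\<And>g. ordlt r g (h g)" "\<And>g b. (b, g) \<in> r \<Longrightarrow> ordlt r (F b) (h g)"
    by metis
  have "\<exists>\<delta>\<in>?C. ordlt r \<alpha> \<delta>" for \<alpha>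
  proof -
    define s where "s n = (h ^^ Suc n) \<alpha>" for n
    have "|range s| <o r" by (rule countable_ordLess) simp
    then obtain \<delta> where \<delta>: "\<And>n. (s n, \<delta>) \<in> r" "\<And>b. ordlt r b \<delta> \<Longrightarrow> \<exists>n. ordlt r b (s n)"
      using small_has_sup by blast
    have "ordlt r (F b) \<delta>" if b: "ordlt r b \<delta>" for b
    proof -
      obtain n where "ordlt r b (s n)" using \<delta>(2) b by blast
      then have "ordlt r (F b) (s (Suc n))" using h(2) ordlt_imp_r unfolding s_def by simp
      then show ?thesis using \<delta>(1) ordlt_r_trans by blast
    qed
    moreover have "ordlt r \<alpha> \<delta>" using h(1) \<delta>(1)[of 0] ordlt_r_trans unfolding s_def by auto
    ultimately show ?thesis by blast
  qed
  moreover have "\<delta> \<in> ?C" if "\<forall>\<beta>. ordlt r \<beta> \<delta> \<longrightarrow> (\<exists>\<gamma>\<in>?C. ordlt r \<beta> \<gamma> \<and> ordlt r \<gamma> \<delta>)" for \<delta>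
    using that ordlt_trans by blast
  ultimately show ?thesis unfolding club_def by blast
qed

definition interleaved :: "('k \<Rightarrow> 'a set) \<Rightarrow> ('k \<Rightarrow> 'a set) \<Rightarrow> 'k \<Rightarrow> bool" where
  "interleaved As Bs d \<longleftrightarrow> (\<forall>b. ordlt r b d \<longrightarrow>
     (\<exists>c. ordlt r c d \<and> As b \<subseteq> Bs c) \<and> (\<exists>c. ordlt r c d \<and> Bs b \<subseteq> As c))"

lemma kappa_rep_club_interleaved:
  assumes "kappa_rep r A As" "kappa_rep r A Bs"
  shows "\<exists>C. club r C \<and> (\<forall>d\<in>C. interleaved As Bs d)"
proof -
  have cover: "\<exists>c. X b \<subseteq> Y c" if "kappa_rep r A X" "kappa_rep r A Y" for X Y b
  proof (rule small_subset_mono_family)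
    show "\<And>i j. (i, j) \<in> r \<Longrightarrow> Y i \<subseteq> Y j" using that(2) unfolding kappa_rep_def by blast
    show "X b \<subseteq> (\<Union>i. Y i)" using that unfolding kappa_rep_def by blast
    show "|X b| <o r" using that(1) unfolding kappa_rep_def by blast
  qed
  obtain fa where fa: "\<And>b. As b \<subseteq> Bs (fa b)" using cover[OF assms] by metis
  obtain ga where ga: "\<And>b. Bs b \<subseteq> As (ga b)" using cover[OF assms(2,1)] by metis
  define F where "F b = (if (fa b, ga b) \<in> r then ga b else fa b)" for b
  have "(fa b, F b) \<in> r" "(ga b, F b) \<in> r" for b
    unfolding F_def using r_total by auto
  then have "interleaved As Bs d" if "\<forall>b. ordlt r b d \<longrightarrow> ordlt r (F b) d" for d
    unfolding interleaved_def using that fa ga r_ordlt_trans by blast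
  then show ?thesis using club_closure_points[of F] by blast
qed

lemma kappa_rep_interleaved_eq:
  assumes "kappa_rep r A As" "kappa_rep r A Bs" "isLimit r d" "interleaved As Bs d"
  shows "As d = Bs d"
proof -
  have "X d \<subseteq> Y d" if X: "kappa_rep r A X" and Y: "kappa_rep r A Y" and XY: "interleaved X Y d"
    for X Y
  proof
    fix x assume "x \<in> X d"
    then obtain b where "ordlt r b d" "x \<in> X b"
      using X \<open>isLimit r d\<close> unfolding kappa_rep_def by blast
    then obtain c where "ordlt r c d" "x \<in> Y c" using XY unfolding interleaved_def by blast
    then show "x \<in> Y d" using Y ordlt_imp_r unfolding kappa_rep_def by blast
  qed
  moreover have "interleaved Bs As d" using assms(4) unfolding interleaved_def by blast
  ultimately show ?thesis using assms by blast
qed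

lemma nice_if_rep_not_splits:
  assumes rep: "kappa_rep r A Bs"
    and not_splits: "\<And>d a. isLimit r d \<Longrightarrow> a \<in> A \<Longrightarrow> \<exists>b. ordlt r b d \<and> \<not> bs_splits lt a (Bs d) (Bs b)"
  shows "nice r lt A"
  unfolding nice_def stationary_def
proof (intro allI impI notI)
  fix As assume As: "kappa_rep r A As"
  then obtain C where C: "club r C" "\<forall>d\<in>C. interleaved As Bs d"
    using kappa_rep_club_interleaved rep by blast
  assume "\<forall>C. club r C \<longrightarrow> Sp_bs r lt A As \<inter> C \<noteq> {}"
  then obtain d a where d: "d \<in> C" "isLimit r d" and a: "a \<in> A"
    and splits: "\<forall>\<beta>. ordlt r \<beta> d \<longrightarrow> bs_splits lt a (As d) (As \<beta>)"
    using C(1) unfolding Sp_bs_def by blast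
  obtain b where b: "ordlt r b d" "\<not> bs_splits lt a (Bs d) (Bs b)" using not_splits d(2) a by blast
  obtain \<beta> where "ordlt r \<beta> d" "Bs b \<subseteq> As \<beta>"
    using C(2) d(1) b(1) unfolding interleaved_def by blast
  moreover have "As d = Bs d" using kappa_rep_interleaved_eq As rep d C(2) by blast
  ultimately have "bs_splits lt a (Bs d) (Bs b)" using splits bs_splits_antimono by metis
  then show False using b(2) by contradiction
qed

end

section \<open>The base order\<close>

context uncountable_regular
begin

lemma base_lt_total: "f \<noteq> g \<Longrightarrow> base_lt r f g \<or> base_lt r g f"
proof -
  assume "f \<noteq> g"
  then have ex: "\<exists>n. f n \<noteq> g n" by (meson ext)
  define n where "n = (LEAST n. f n \<noteq> g n)"
  have n: "f n \<noteq> g n" "\<forall>m<n. f m = g m"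
    unfolding n_def using LeastI_ex[OF ex] not_less_Least by blast+
  have "lex_kq r (f n) (g n) \<or> lex_kq r (g n) (f n)"
  proof (cases "fst (f n) = fst (g n)")
    case True
    then have "snd (f n) \<noteq> snd (g n)" using n(1) by (metis prod_eqI)
    then show ?thesis unfolding lex_kq_def using True by auto
  next
    case False
    then show ?thesis unfolding lex_kq_def using ordlt_trichotomy by blast
  qed
  then show ?thesis unfolding base_lt_def using n by metis
qed

definition base_below :: "'k \<Rightarrow> (nat \<Rightarrow> 'k \<times> rat) set" where
  "base_below d = {f \<in> base_set r. \<forall>n. ordlt r (fst (f n)) d}"

lemma base_below_mono: "(b, c) \<in> r \<Longrightarrow> base_below b \<subseteq> base_below c"
  unfolding base_below_def using ordlt_r_trans by blast

lemma finite_range_fst: "f \<in> base_set r \<Longrightarrow> finite (range (\<lambda>n. fst (f n)))"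
proof -
  assume "f \<in> base_set r"
  then have "finite ((\<lambda>n. fst (f n)) ` {n. fst (f n) \<noteq> kzero r})" unfolding base_set_def by simp
  moreover have
    "range (\<lambda>n. fst (f n)) \<subseteq> insert (kzero r) ((\<lambda>n. fst (f n)) ` {n. fst (f n) \<noteq> kzero r})"
    by auto
  ultimately show ?thesis by (meson finite_insert finite_subset)
qed

lemma base_lt_interpolate:
  assumes "\<forall>k<m. f k = g k" "lex_kq r (f m) (g m)" "f m \<noteq> g m"
  obtains \<mu> where "base_lt r f \<mu>" "base_lt r \<mu> g" "\<forall>k<m. \<mu> k = f k" "fst (\<mu> m) = fst (f m)"
    "\<forall>k>m. \<mu> k = (kzero r, 0)"
proof -
  define q where
    "q = (if fst (f m) = fst (g m) then (snd (f m) + snd (g m)) / 2 else snd (f m) + 1)"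
  define \<mu> where
    "\<mu> k = (if k < m then f k else if k = m then (fst (f m), q) else (kzero r, 0))" for k
  have "fst (f m) = fst (g m) \<Longrightarrow> snd (f m) < snd (g m)" using assms(2) unfolding lex_kq_def by auto
  then have q: "snd (f m) < q" "fst (f m) = fst (g m) \<Longrightarrow> q < snd (g m)" unfolding q_def by auto
  have "base_lt r f \<mu>" unfolding base_lt_def
    using q(1) by (intro exI[of _ m]) (auto simp: \<mu>_def lex_kq_def prod_eq_iff)
  moreover have "base_lt r \<mu> g" unfolding base_lt_def
    using q(2) assms by (intro exI[of _ m]) (auto simp: \<mu>_def lex_kq_def prod_eq_iff)
  ultimately show ?thesis using that unfolding \<mu>_def by simp
qed

lemma base_below_gap:
  assumes f: "f \<in> base_set r" "f \<notin> base_below d" and d: "isLimit r d"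
  shows "\<exists>b. ordlt r b d \<and>
    (\<forall>g\<in>base_below d. base_lt r f g \<longrightarrow> (\<exists>\<mu>\<in>base_below b. base_lt r f \<mu> \<and> base_lt r \<mu> g))"
proof -
  have ex: "\<exists>n. \<not> ordlt r (fst (f n)) d" using f unfolding base_below_def by blast
  define n where "n = (LEAST n. \<not> ordlt r (fst (f n)) d)"
  have n: "\<not> ordlt r (fst (f n)) d" "\<forall>k<n. ordlt r (fst (f k)) d"
    unfolding n_def using LeastI_ex[OF ex] not_less_Least by blast+
  obtain b where b: "ordlt r b d" "ordlt r (kzero r) b" "\<forall>k<n. ordlt r (fst (f k)) b"
    using finite_bounded_below_limit[of "insert (kzero r) ((\<lambda>k. fst (f k)) ` {..<n})" d]
      n(2) kzero_ordlt_limit[OF d] d by auto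
  have "\<exists>\<mu>\<in>base_below b. base_lt r f \<mu> \<and> base_lt r \<mu> g"
    if g: "g \<in> base_below d" "base_lt r f g" for g
  proof -
    obtain m where m: "\<forall>k<m. f k = g k" "f m \<noteq> g m" "lex_kq r (f m) (g m)"
      using g(2) unfolding base_lt_def by blast
    have "ordlt r (fst (g k)) d" for k using g(1) unfolding base_below_def by blast
    \<comment> \<open>g stays below d, so it must already differ from f before f leaves d\<close>
    then have "m < n"
    proof (cases m n rule: linorder_cases)
      case greater
      then show ?thesis using m(1) n(1) \<open>ordlt r (fst (g n)) d\<close> by auto
    next
      case equal
      then show ?thesis
        using m(3) n(1) \<open>ordlt r (fst (g n)) d\<close> ordlt_trans unfolding lex_kq_def by auto
    qed
    obtain \<mu> where \<mu>: "base_lt r f \<mu>" "base_lt r \<mu> g" "\<forall>k<m. \<mu> k = f k" "fst (\<mu> m) = fst (f m)"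
      "\<forall>k>m. \<mu> k = (kzero r, 0)"
      using base_lt_interpolate m by metis
    have "{k. fst (\<mu> k) \<noteq> kzero r} \<subseteq> {..m}"
    proof
      fix k assume "k \<in> {k. fst (\<mu> k) \<noteq> kzero r}"
      then show "k \<in> {..m}" using \<mu>(5) by (cases "m < k") auto
    qed
    then have "\<mu> \<in> base_set r" unfolding base_set_def using finite_subset by blast
    moreover have "ordlt r (fst (\<mu> k)) b" for k
      using \<mu>(3-5) b(2,3) \<open>m < n\<close> by (cases k m rule: linorder_cases) auto
    ultimately show ?thesis using \<mu>(1,2) unfolding base_below_def by blast
  qed
  then show ?thesis using b(1) by blast
qed

lemma rat_embedding: "\<exists>e :: rat \<Rightarrow> 'k. inj e \<and> |range e| <o r"
proof -
  have "|UNIV :: rat set| <o r" by (rule countable_ordLess) simp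
  moreover have "|UNIV :: 'k set| =o r" using card_of_Field_ordIso[OF Card_order_r] by simp
  ultimately have "|UNIV :: rat set| \<le>o |UNIV :: 'k set|"
    using ordLess_imp_ordLeq[OF ordLess_ordIso_trans[OF _ ordIso_symmetric]] by blast
  then obtain e :: "rat \<Rightarrow> 'k" where "inj e"
    using card_of_ordLeq[of "UNIV :: rat set" "UNIV :: 'k set"] by blast
  moreover have "|range e| <o r" by (rule countable_ordLess) simp
  ultimately show ?thesis by blast
qed

lemma base_below_small:
  assumes gamma_omega: "\<forall>X :: 'k set. |X| <o r \<longrightarrow> |Func (UNIV :: nat set) X| <o r"
  shows "|base_below b| <o r"
proof -
  obtain e :: "rat \<Rightarrow> 'k" where e: "inj e" "|range e| <o r" using rat_embedding by blast
  define X where "X = underS r b \<union> range e"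
  have "|underS r b| <o r" using card_of_underS[OF Card_order_r] by simp
  then have "|X| <o r" unfolding X_def using small_Un e(2) by blast
  then have F: "|Func (UNIV :: nat set) X| <o r" using gamma_omega by blast
  define code where "code f n = (if even n then fst (f (n div 2)) else e (snd (f (n div 2))))"
    for f :: "nat \<Rightarrow> 'k \<times> rat" and n
  have code: "code h (2 * k) = fst (h k)" "code h (Suc (2 * k)) = e (snd (h k))" for h k
    unfolding code_def by simp_all
  have "inj code"
  proof (rule injI)
    fix f g assume eq: "code f = code g"
    show "f = g"
    proof
      fix k
      have "fst (f k) = fst (g k)" using code(1)[of f k] code(1)[of g k] eq by simp
      moreover have "snd (f k) = snd (g k)"
        using code(2)[of f k] code(2)[of g k] eq e(1) by (simp add: inj_eq)
      ultimately show "f k = g k" by (simp add: prod_eq_iff)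
    qed
  qed
  moreover have "code ` base_below b \<subseteq> Func (UNIV :: nat set) X"
  proof
    fix y assume "y \<in> code ` base_below b"
    then obtain f where f: "f \<in> base_below b" "y = code f" by blast
    have "fst (f k) \<in> underS r b" for k
      using f(1) unfolding base_below_def underS_def ordlt_def by auto
    then show "y \<in> Func UNIV X" unfolding f(2) Func_def X_def code_def by auto
  qed
  ultimately have "|base_below b| \<le>o |Func (UNIV :: nat set) X|"
    using card_of_ordLeq inj_on_subset by (metis subset_UNIV)
  then show ?thesis using F ordLeq_ordLess_trans by blast
qed

lemma ex_base_below: "f \<in> base_set r \<Longrightarrow> \<exists>b. ordlt r i b \<and> f \<in> base_below b"
proof -
  assume f: "f \<in> base_set r"
  then have "|insert i (range (\<lambda>n. fst (f n)))| <o r"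
    using finite_range_fst finite_ordLess by blast
  then obtain b where "\<forall>k\<in>insert i (range (\<lambda>n. fst (f n))). ordlt r k b"
    using small_strictly_bounded by blast
  then show ?thesis using f unfolding base_below_def by blast
qed

lemma ex_base_below_limit:
  assumes "f \<in> base_below d" "isLimit r d" "ordlt r i d"
  shows "\<exists>b. ordlt r b d \<and> ordlt r i b \<and> f \<in> base_below b"
proof -
  have "finite (insert i (range (\<lambda>n. fst (f n))))"
    using assms(1) finite_range_fst unfolding base_below_def by blast
  moreover have "\<forall>k\<in>insert i (range (\<lambda>n. fst (f n))). ordlt r k d"
    using assms(1,3) unfolding base_below_def by blast
  ultimately obtain b where "ordlt r b d" "\<forall>k\<in>insert i (range (\<lambda>n. fst (f n))). ordlt r k b"
    using finite_bounded_below_limit assms(2) by blast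
  then show ?thesis using assms(1) unfolding base_below_def by blast
qed

end

section \<open>The order I\<close>

locale I_construction = uncountable_regular r for r :: "'k rel" +
  fixes lt :: "'a \<Rightarrow> 'a \<Rightarrow> bool"
    and II :: "'k \<Rightarrow> 'a set"
    and emb :: "(nat \<Rightarrow> 'k \<times> rat) \<Rightarrow> 'a"
    and sc :: "'k \<Rightarrow> 'a \<Rightarrow> 'a"
  assumes gamma_omega: "\<forall>X :: 'k set. |X| <o r \<longrightarrow> |Func (UNIV :: nat set) X| <o r"
    and I0: "II (kzero r) = emb ` base_set r"
    and emb_inj: "inj_on emb (base_set r)"
    and emb_ord: "\<forall>f\<in>base_set r. \<forall>g\<in>base_set r. lt (emb f) (emb g) \<longleftrightarrow> base_lt r f g"
    and Isucc: "\<forall>i. II (ksucc r i) = II i \<union> sc i ` II i"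
    and sc_new: "\<forall>i. \<forall>\<nu>\<in>II i. sc i \<nu> \<notin> II i"
    and sc_inj: "\<forall>i. inj_on (sc i) (II i)"
    and sc_below: "\<forall>i. \<forall>\<nu>\<in>II i. lt (sc i \<nu>) \<nu>"
    and sc_cut: "\<forall>i. \<forall>\<nu>\<in>II i. \<forall>\<tau>\<in>II i - {\<nu>}. lt \<tau> (sc i \<nu>) \<longleftrightarrow> lt \<tau> \<nu>"
    and sc_ord: "\<forall>i. \<forall>\<nu>\<in>II i. \<forall>\<mu>\<in>II i. \<nu> \<noteq> \<mu> \<longrightarrow> (lt (sc i \<nu>) (sc i \<mu>) \<longleftrightarrow> lt \<nu> \<mu>)"
    and Ilim: "\<forall>\<delta>. isLimit r \<delta> \<longrightarrow> II \<delta> = (\<Union>i\<in>{i. ordlt r i \<delta>}. II i)"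
    and lin: "\<forall>x\<in>(\<Union>i. II i). \<forall>y\<in>(\<Union>i. II i). \<forall>z\<in>(\<Union>i. II i).
               \<not> lt x x \<and> (lt x y \<and> lt y z \<longrightarrow> lt x z) \<and> (lt x y \<or> x = y \<or> lt y x)"
begin

abbreviation I :: "'a set" where
  "I \<equiv> \<Union>i. II i"

lemma lt_irrefl: "x \<in> I \<Longrightarrow> \<not> lt x x"
  using lin by blast

lemma lt_trans: "x \<in> I \<Longrightarrow> y \<in> I \<Longrightarrow> z \<in> I \<Longrightarrow> lt x y \<Longrightarrow> lt y z \<Longrightarrow> lt x z"
  using lin by blast

lemma lt_total: "x \<in> I \<Longrightarrow> y \<in> I \<Longrightarrow> lt x y \<or> x = y \<or> lt y x"
  using lin by blast

lemma lt_asym: "x \<in> I \<Longrightarrow> y \<in> I \<Longrightarrow> lt x y \<Longrightarrow> \<not> lt y x"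
  using lt_trans lt_irrefl by blast

lemma II_mono: "(i, j) \<in> r \<Longrightarrow> II i \<subseteq> II j"
proof (induct j arbitrary: i rule: transfinite_induct)
  case zero
  then show ?case using r_antisym kzero_least by blast
next
  case (succ j)
  then have "i = ksucc r j \<or> (i, j) \<in> r" using ordlt_ksuccD unfolding ordlt_def by blast
  then show ?case using succ.hyps Isucc by blast
next
  case (limit d)
  then have "i = d \<or> ordlt r i d" unfolding ordlt_def by blast
  then show ?case using Ilim limit.hyps(1) by blast
qed

lemma sc_mem: "x \<in> II i \<Longrightarrow> sc i x \<in> II (ksucc r i)"
  using Isucc by blast

lemma sc_eq_sc:
  assumes "x \<in> II i" "y \<in> II j" "sc i x = sc j y"
  shows "i = j" "x = y"
proof -
  have "\<not> ordlt r i j" "\<not> ordlt r j i"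
    using sc_mem assms II_mono ksucc_least sc_new by (metis subsetD)+
  then show "i = j" using ordlt_trichotomy by blast
  then show "x = y" using assms sc_inj inj_on_def by metis
qed

lemma emb_mem: "f \<in> base_set r \<Longrightarrow> emb f \<in> II i"
  using I0 II_mono kzero_least by blast

lemma emb_ne_sc: "f \<in> base_set r \<Longrightarrow> x \<in> II i \<Longrightarrow> emb f \<noteq> sc i x"
  using emb_mem sc_new by metis

inductive has_root :: "'a \<Rightarrow> (nat \<Rightarrow> 'k \<times> rat) \<Rightarrow> bool" where
  root: "f \<in> base_set r \<Longrightarrow> has_root (emb f) f"
| sc: "has_root x f \<Longrightarrow> x \<in> II i \<Longrightarrow> has_root (sc i x) f"

lemma has_root_base_set: "has_root x f \<Longrightarrow> f \<in> base_set r"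
  by (induct rule: has_root.induct) auto

lemma has_root_scD:
  assumes "has_root (sc i x) f" "x \<in> II i"
  shows "has_root x f"
  using assms(1)
proof (cases rule: has_root.cases)
  case root
  then show ?thesis using emb_ne_sc assms(2) by metis
next
  case (sc y j)
  then show ?thesis using sc_eq_sc[OF assms(2), of y j] by simp
qed

lemma has_root_embD:
  assumes "has_root (emb g) f" "g \<in> base_set r"
  shows "f = g"
  using assms(1)
proof (cases rule: has_root.cases)
  case root
  then show ?thesis using emb_inj assms(2) inj_on_def by metis
next
  case (sc y j)
  then show ?thesis using emb_ne_sc assms(2) by metis
qed

lemma ex_has_root_II: "x \<in> II i \<Longrightarrow> \<exists>f. has_root x f"
proof (induct i arbitrary: x rule: transfinite_induct)
  case zero
  then show ?case using I0 has_root.root by auto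
next
  case (succ j)
  then consider "x \<in> II j" | y where "y \<in> II j" "x = sc j y" using Isucc by blast
  then show ?case using succ.hyps has_root.sc by cases blast+
next
  case (limit d)
  then show ?case using Ilim by blast
qed

lemma ex_has_root: "x \<in> I \<Longrightarrow> \<exists>f. has_root x f"
  using ex_has_root_II by blast

definition roots_ordered :: "'a set \<Rightarrow> bool" where
  "roots_ordered X \<longleftrightarrow>
     (\<forall>x\<in>X. \<forall>y\<in>X. \<forall>f g. has_root x f \<longrightarrow> has_root y g \<longrightarrow> base_lt r f g \<longrightarrow> lt x y)"

lemma roots_ordered_kzero: "roots_ordered (II (kzero r))"
  unfolding roots_ordered_def
proof (intro ballI allI impI)
  fix x y f g assume "x \<in> II (kzero r)" "y \<in> II (kzero r)"
    and root: "has_root x f" "has_root y g" "base_lt r f g"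
  then obtain f' g' where "f' \<in> base_set r" "g' \<in> base_set r" "x = emb f'" "y = emb g'"
    using I0 by auto
  then show "lt x y" using has_root_embD root emb_ord by metis
qed

lemma roots_ordered_ksucc:
  assumes IH: "roots_ordered (II j)"
  shows "roots_ordered (II (ksucc r j))"
  unfolding roots_ordered_def
proof (intro ballI allI impI)
  have IH': "lt x y" if "x \<in> II j" "y \<in> II j" "has_root x f" "has_root y g" "base_lt r f g"
    for x y f g
    using IH that unfolding roots_ordered_def by blast
  fix x y f g assume xy: "x \<in> II (ksucc r j)" "y \<in> II (ksucc r j)"
    and root: "has_root x f" "has_root y g" "base_lt r f g"
  have distinct_roots: "\<not> (has_root v f \<and> has_root v g)" if "v \<in> II j" for v
    using IH'[OF that that _ _ root(3)] lt_irrefl that by blast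
  have old_or_new: "v \<in> II j \<or> (\<exists>\<nu>\<in>II j. v = sc j \<nu>)" if "v \<in> II (ksucc r j)" for v
    using that Isucc by blast
  show "lt x y"
  proof (cases "x \<in> II j")
    case x: True
    show ?thesis
    proof (cases "y \<in> II j")
      case True
      then show ?thesis using IH' x root by blast
    next
      case False
      then obtain \<mu> where \<mu>: "\<mu> \<in> II j" "y = sc j \<mu>" using old_or_new xy(2) by blast
      then have "has_root \<mu> g" using has_root_scD root(2) by blast
      then have "lt x \<mu>" "x \<noteq> \<mu>" using IH' x \<mu>(1) root distinct_roots[OF \<mu>(1)] by blast+
      then show ?thesis using sc_cut \<mu> x by blast
    qed
  next
    case False
    then obtain \<nu> where \<nu>: "\<nu> \<in> II j" "x = sc j \<nu>" using old_or_new xy(1) by blast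
    then have "has_root \<nu> f" using has_root_scD root(1) by blast
    show ?thesis
    proof (cases "y \<in> II j")
      case y: True
      then have "lt \<nu> y" "y \<noteq> \<nu>"
        using IH' \<nu>(1) \<open>has_root \<nu> f\<close> root(2,3) distinct_roots[OF \<nu>(1)] by blast+
      then have "\<not> lt y \<nu>" using lt_asym \<nu>(1) y by blast
      then have "\<not> lt y x" using sc_cut \<nu> y \<open>y \<noteq> \<nu>\<close> by blast
      moreover have "y \<noteq> x" using sc_new \<nu> y by blast
      ultimately show ?thesis using lt_total xy by blast
    next
      case False
      then obtain \<mu> where \<mu>: "\<mu> \<in> II j" "y = sc j \<mu>" using old_or_new xy(2) by blast
      then have "has_root \<mu> g" using has_root_scD root(2) by blast
      then have "lt \<nu> \<mu>" "\<nu> \<noteq> \<mu>"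
        using IH' \<nu>(1) \<mu>(1) \<open>has_root \<nu> f\<close> root(3) distinct_roots[OF \<nu>(1)] by blast+
      then show ?thesis using sc_ord \<nu> \<mu> by blast
    qed
  qed
qed

lemma roots_ordered_limit:
  assumes "isLimit r d" "\<And>i. ordlt r i d \<Longrightarrow> roots_ordered (II i)"
  shows "roots_ordered (II d)"
  unfolding roots_ordered_def
proof (intro ballI allI impI)
  fix x y f g assume "x \<in> II d" "y \<in> II d"
    and root: "has_root x f" "has_root y g" "base_lt r f g"
  then obtain i j where ij: "ordlt r i d" "x \<in> II i" "ordlt r j d" "y \<in> II j"
    using Ilim assms(1) by blast
  define k where "k = (if (i, j) \<in> r then j else i)"
  have "ordlt r k d" "x \<in> II k" "y \<in> II k" unfolding k_def using ij II_mono r_total by auto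
  then show "lt x y" using assms(2) root unfolding roots_ordered_def by blast
qed

lemma roots_ordered_II: "roots_ordered (II i)"
  by (induct i rule: transfinite_induct)
    (simp_all add: roots_ordered_kzero roots_ordered_ksucc roots_ordered_limit)

lemma lt_if_base_lt_roots:
  assumes "x \<in> I" "y \<in> I" "has_root x f" "has_root y g" "base_lt r f g"
  shows "lt x y"
proof -
  obtain i j where "x \<in> II i" "y \<in> II j" using assms by blast
  then have "x \<in> II (if (i, j) \<in> r then j else i)" "y \<in> II (if (i, j) \<in> r then j else i)"
    using II_mono r_total by auto
  then show ?thesis using roots_ordered_II assms(3-5) unfolding roots_ordered_def by blast
qed

lemma ancestor_in_stage:
  assumes "has_root a f" "a \<notin> II d"
  shows "\<exists>p\<in>II d. has_root p f \<and> lt a p \<and> (\<forall>b\<in>II d - {p}. lt b a \<longleftrightarrow> lt b p)"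
  using assms
proof (induct rule: has_root.induct)
  case (root f)
  then show ?case using emb_mem by blast
next
  case (sc x f i)
  have "\<not> ordlt r i d"
  proof
    assume "ordlt r i d"
    then have "II (ksucc r i) \<subseteq> II d" using II_mono ksucc_least by blast
    then show False using sc_mem[OF sc.hyps(3)] sc.prems by blast
  qed
  then have stage: "II d \<subseteq> II i" using not_ordlt II_mono by blast
  have below: "lt (sc i x) x" using sc_below sc.hyps(3) by blast
  have cut: "lt b (sc i x) \<longleftrightarrow> lt b x" if "b \<in> II d" "b \<noteq> x" for b
    using that stage sc_cut sc.hyps(3) by blast
  show ?case
  proof (cases "x \<in> II d")
    case True
    then show ?thesis using sc.hyps(1) below cut by blast
  next
    case False
    then obtain p where p: "p \<in> II d" "has_root p f" "lt x p" "\<forall>b\<in>II d - {p}. lt b x \<longleftrightarrow> lt b p"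
      using sc.hyps(2) by blast
    have "lt (sc i x) p"
      using lt_trans[OF _ _ _ below p(3)] sc_mem[OF sc.hyps(3)] sc.hyps(3) p(1) by blast
    moreover have "\<forall>b\<in>II d - {p}. lt b (sc i x) \<longleftrightarrow> lt b p" using cut p(4) False by blast
    ultimately show ?thesis using p(1,2) by blast
  qed
qed

text \<open>This is J_d of the proof idea. Unlike II d it is small: its roots range over
  base_below d, a set of size at most (|d| + omega)^omega.\<close>

definition canonical_rep :: "'k \<Rightarrow> 'a set" where
  "canonical_rep d = {x \<in> II d. \<exists>f\<in>base_below d. has_root x f}"

lemma canonical_rep_mono: "(b, c) \<in> r \<Longrightarrow> canonical_rep b \<subseteq> canonical_rep c"
  unfolding canonical_rep_def using II_mono base_below_mono by blast

lemma canonical_rep_subset: "canonical_rep d \<subseteq> I"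
  unfolding canonical_rep_def by blast

lemma canonical_rep_limit:
  assumes d: "isLimit r d" and x: "x \<in> canonical_rep d"
  shows "\<exists>b. ordlt r b d \<and> x \<in> canonical_rep b"
proof -
  obtain f where f: "f \<in> base_below d" "has_root x f" "x \<in> II d"
    using x unfolding canonical_rep_def by blast
  obtain i where "ordlt r i d" "x \<in> II i" using f(3) Ilim d by blast
  then obtain b where "ordlt r b d" "ordlt r i b" "f \<in> base_below b"
    using ex_base_below_limit f(1) d by blast
  then show ?thesis
    using \<open>x \<in> II i\<close> II_mono ordlt_imp_r f(2) unfolding canonical_rep_def by blast
qed

lemma canonical_rep_cover: "x \<in> I \<Longrightarrow> \<exists>b. x \<in> canonical_rep b"
proof -
  assume "x \<in> I"
  then obtain i f where "x \<in> II i" "has_root x f" using ex_has_root by blast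
  moreover obtain b where "ordlt r i b" "f \<in> base_below b"
    using ex_base_below has_root_base_set calculation(2) by blast
  ultimately show ?thesis using II_mono ordlt_imp_r unfolding canonical_rep_def by blast
qed

lemma card_of_descendants_ordLess:
  assumes "|Fs| <o r"
  shows "|{x \<in> II i. \<exists>f\<in>Fs. has_root x f}| <o r"
proof (induct i rule: transfinite_induct)
  case zero
  have "{x \<in> II (kzero r). \<exists>f\<in>Fs. has_root x f} \<subseteq> emb ` Fs"
  proof
    fix x assume "x \<in> {x \<in> II (kzero r). \<exists>f\<in>Fs. has_root x f}"
    then obtain f g where "f \<in> Fs" "has_root x f" "g \<in> base_set r" "x = emb g" using I0 by auto
    then show "x \<in> emb ` Fs" using has_root_embD by blast
  qed
  moreover have "|emb ` Fs| <o r" using card_of_image assms ordLeq_ordLess_trans by blast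
  ultimately show ?case using card_of_mono1 ordLeq_ordLess_trans by blast
next
  case (succ j)
  let ?S = "{x \<in> II j. \<exists>f\<in>Fs. has_root x f}"
  have "{x \<in> II (ksucc r j). \<exists>f\<in>Fs. has_root x f} \<subseteq> ?S \<union> sc j ` ?S"
  proof
    fix x assume x: "x \<in> {x \<in> II (ksucc r j). \<exists>f\<in>Fs. has_root x f}"
    then obtain f where f: "f \<in> Fs" "has_root x f" by blast
    have "x \<in> II j \<or> (\<exists>y\<in>II j. x = sc j y)" using x Isucc by blast
    then show "x \<in> ?S \<union> sc j ` ?S" using f has_root_scD by blast
  qed
  moreover have "|sc j ` ?S| <o r" using card_of_image succ ordLeq_ordLess_trans by blast
  then have "|?S \<union> sc j ` ?S| <o r" using small_Un succ by blast
  ultimately show ?case using card_of_mono1 ordLeq_ordLess_trans by blast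
next
  case (limit d)
  let ?S = "\<lambda>i. {x \<in> II i. \<exists>f\<in>Fs. has_root x f}"
  have "{x \<in> II d. \<exists>f\<in>Fs. has_root x f} \<subseteq> (\<Union>i\<in>underS r d. ?S i)"
  proof
    fix x assume x: "x \<in> {x \<in> II d. \<exists>f\<in>Fs. has_root x f}"
    then obtain i where "ordlt r i d" "x \<in> II i" using Ilim limit(1) by blast
    then show "x \<in> (\<Union>i\<in>underS r d. ?S i)" using x unfolding underS_def ordlt_def by blast
  qed
  moreover have "|SIGMA i : underS r d. ?S i| <o r"
  proof (rule stable_elim)
    show "stable r" using regularCard_stable[OF Card_order_r _ regular] infinite_UNIV by simp
    show "|underS r d| <o r" using card_of_underS[OF Card_order_r] by simp
    show "|?S i| <o r" if "i \<in> underS r d" for i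
      using that limit(2) unfolding underS_def ordlt_def by blast
  qed
  then have "|\<Union>i\<in>underS r d. ?S i| <o r" using card_of_UNION_Sigma ordLeq_ordLess_trans by blast
  ultimately show ?case using card_of_mono1 ordLeq_ordLess_trans by blast
qed

lemma canonical_rep_small: "|canonical_rep d| <o r"
  unfolding canonical_rep_def
  by (rule card_of_descendants_ordLess[OF base_below_small[OF gamma_omega]])

lemma kappa_rep_canonical_rep: "kappa_rep r I canonical_rep"
  unfolding kappa_rep_def
proof (intro conjI allI impI)
  show "canonical_rep \<alpha> \<subseteq> canonical_rep \<beta>" if "(\<alpha>, \<beta>) \<in> r" for \<alpha> \<beta>
    using canonical_rep_mono that .
  show "canonical_rep \<delta> = (\<Union>\<beta>\<in>{\<beta>. ordlt r \<beta> \<delta>}. canonical_rep \<beta>)" if "isLimit r \<delta>" for \<delta>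
  proof
    show "canonical_rep \<delta> \<subseteq> (\<Union>\<beta>\<in>{\<beta>. ordlt r \<beta> \<delta>}. canonical_rep \<beta>)"
      using canonical_rep_limit[OF that] by blast
    show "(\<Union>\<beta>\<in>{\<beta>. ordlt r \<beta> \<delta>}. canonical_rep \<beta>) \<subseteq> canonical_rep \<delta>"
      using canonical_rep_mono ordlt_imp_r by blast
  qed
  show "|canonical_rep \<alpha>| <o r" for \<alpha>
    by (rule canonical_rep_small)
  show "(\<Union>\<alpha>. canonical_rep \<alpha>) = I"
  proof
    show "(\<Union>\<alpha>. canonical_rep \<alpha>) \<subseteq> I" using canonical_rep_subset by blast
    show "I \<subseteq> (\<Union>\<alpha>. canonical_rep \<alpha>)" using canonical_rep_cover by blast
  qed
qed

lemma canonical_rep_not_splits_root_below: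
  assumes d: "isLimit r d" and a: "a \<in> I" "a \<notin> canonical_rep d"
    and f: "has_root a f" "f \<in> base_below d"
  shows "\<exists>b. ordlt r b d \<and> \<not> bs_splits lt a (canonical_rep d) (canonical_rep b)"
proof -
  have "a \<notin> II d" using a(2) f unfolding canonical_rep_def by blast
  then obtain p where p: "p \<in> II d" "has_root p f" "lt a p" "\<forall>c\<in>II d - {p}. lt c a \<longleftrightarrow> lt c p"
    using ancestor_in_stage f(1) by blast
  then have "p \<in> canonical_rep d" using f(2) unfolding canonical_rep_def by blast
  then obtain b where b: "ordlt r b d" "p \<in> canonical_rep b" using canonical_rep_limit d by blast
  have "\<forall>x\<in>canonical_rep d. lt a x \<longrightarrow> (\<exists>c\<in>canonical_rep b. lt a c \<and> (lt c x \<or> c = x))"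
  proof (intro ballI impI)
    fix x assume x: "x \<in> canonical_rep d" "lt a x"
    have "x \<in> II d" using x(1) unfolding canonical_rep_def by blast
    have "lt p x \<or> x = p"
    proof (rule disjCI)
      assume "x \<noteq> p"
      have "\<not> lt x a" using lt_asym[OF a(1) _ x(2)] \<open>x \<in> II d\<close> by blast
      then have "\<not> lt x p" using p(4) \<open>x \<in> II d\<close> \<open>x \<noteq> p\<close> by blast
      then show "lt p x" using lt_total[of p x] p(1) \<open>x \<in> II d\<close> \<open>x \<noteq> p\<close> by blast
    qed
    then show "\<exists>c\<in>canonical_rep b. lt a c \<and> (lt c x \<or> c = x)" using b(2) p(3) by blast
  qed
  then have "\<not> bs_splits lt a (canonical_rep d) (canonical_rep b)"
    by (rule not_bs_splits_if_separated[OF lin a(1) canonical_rep_subset canonical_rep_subset a(2)])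
  then show ?thesis using b(1) by blast
qed

lemma canonical_rep_not_splits_root_not_below:
  assumes d: "isLimit r d" and a: "a \<in> I" "a \<notin> canonical_rep d"
    and f: "has_root a f" "f \<notin> base_below d"
  shows "\<exists>b. ordlt r b d \<and> \<not> bs_splits lt a (canonical_rep d) (canonical_rep b)"
proof -
  obtain b where b: "ordlt r b d"
    and gap: "\<forall>g\<in>base_below d. base_lt r f g \<longrightarrow> (\<exists>\<mu>\<in>base_below b. base_lt r f \<mu> \<and> base_lt r \<mu> g)"
    using base_below_gap has_root_base_set[OF f(1)] f(2) d by blast
  have "\<forall>x\<in>canonical_rep d. lt a x \<longrightarrow> (\<exists>c\<in>canonical_rep b. lt a c \<and> (lt c x \<or> c = x))"
  proof (intro ballI impI)
    fix x assume x: "x \<in> canonical_rep d" "lt a x"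
    obtain g where g: "g \<in> base_below d" "has_root x g" "x \<in> I"
      using x(1) unfolding canonical_rep_def by blast
    have "base_lt r f g"
    proof (rule ccontr)
      assume "\<not> base_lt r f g"
      moreover have "f \<noteq> g" using g(1) f(2) by blast
      ultimately have "base_lt r g f" using base_lt_total by blast
      then have "lt x a" by (rule lt_if_base_lt_roots[OF g(3) a(1) g(2) f(1)])
      then show False using lt_asym[OF a(1) g(3) x(2)] by blast
    qed
    then obtain \<mu> where \<mu>: "\<mu> \<in> base_below b" "base_lt r f \<mu>" "base_lt r \<mu> g"
      using gap g(1) by blast
    then have "\<mu> \<in> base_set r" unfolding base_below_def by blast
    then have c: "emb \<mu> \<in> canonical_rep b" "emb \<mu> \<in> I" "has_root (emb \<mu>) \<mu>"
      using emb_mem \<mu>(1) has_root.root unfolding canonical_rep_def by blast+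
    have "lt a (emb \<mu>)" by (rule lt_if_base_lt_roots[OF a(1) c(2) f(1) c(3) \<mu>(2)])
    moreover have "lt (emb \<mu>) x" by (rule lt_if_base_lt_roots[OF c(2) g(3) c(3) g(2) \<mu>(3)])
    ultimately show "\<exists>c\<in>canonical_rep b. lt a c \<and> (lt c x \<or> c = x)" using c(1) by blast
  qed
  then have "\<not> bs_splits lt a (canonical_rep d) (canonical_rep b)"
    by (rule not_bs_splits_if_separated[OF lin a(1) canonical_rep_subset canonical_rep_subset a(2)])
  then show ?thesis using b by blast
qed

lemma canonical_rep_not_splits:
  assumes d: "isLimit r d" and a: "a \<in> I"
  shows "\<exists>b. ordlt r b d \<and> \<not> bs_splits lt a (canonical_rep d) (canonical_rep b)"
proof (cases "a \<in> canonical_rep d")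
  case True
  then obtain b where b: "ordlt r b d" "a \<in> canonical_rep b"
    using canonical_rep_limit[OF d] by blast
  have "\<not> bs_splits lt a (canonical_rep d) (canonical_rep b)"
    by (rule not_bs_splits_if_mem[OF b(2)])
  then show ?thesis using b(1) by blast
next
  case False
  obtain f where f: "has_root a f" using ex_has_root a by blast
  show ?thesis
  proof (cases "f \<in> base_below d")
    case True
    show ?thesis by (rule canonical_rep_not_splits_root_below[OF d a False f True])
  next
    case False
    show ?thesis
      by (rule canonical_rep_not_splits_root_not_below[OF d a \<open>a \<notin> canonical_rep d\<close> f False])
  qed
qed

end

theorem mainTheorem13:
  fixes r :: "'k rel"
    and lt :: "'a \<Rightarrow> 'a \<Rightarrow> bool"
    and II :: "'k \<Rightarrow> 'a set"
    and emb :: "(nat \<Rightarrow> 'k \<times> rat) \<Rightarrow> 'a"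
    and sc :: "'k \<Rightarrow> 'a \<Rightarrow> 'a"
  assumes card: "card_order r"
    and regular: "regularCard r"
    and uncountable: "natLeq <o r"
    and kappa_lt_kappa: "\<forall>X :: 'k set. |X| <o r \<longrightarrow> |Func X (UNIV :: 'k set)| \<le>o r"
    and gamma_omega: "\<forall>X :: 'k set. |X| <o r \<longrightarrow> |Func (UNIV :: nat set) X| <o r"
    \<comment> \<open>I^0 is a copy of the base order\<close>
    and I0: "II (kzero r) = emb ` base_set r"
    and emb_inj: "inj_on emb (base_set r)"
    and emb_ord: "\<forall>f\<in>base_set r. \<forall>g\<in>base_set r. lt (emb f) (emb g) \<longleftrightarrow> base_lt r f g"
    \<comment> \<open>successor steps: sc i \<nu> is the new element \<nu>^(i+1)\<close>
    and Isucc: "\<forall>i. II (ksucc r i) = II i \<union> sc i ` II i"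
    and sc_new: "\<forall>i. \<forall>\<nu>\<in>II i. sc i \<nu> \<notin> II i"
    and sc_inj: "\<forall>i. inj_on (sc i) (II i)"
    and sc_below: "\<forall>i. \<forall>\<nu>\<in>II i. lt (sc i \<nu>) \<nu>"
    and sc_cut: "\<forall>i. \<forall>\<nu>\<in>II i. \<forall>\<tau>\<in>II i - {\<nu>}. lt \<tau> (sc i \<nu>) \<longleftrightarrow> lt \<tau> \<nu>"
    and sc_ord: "\<forall>i. \<forall>\<nu>\<in>II i. \<forall>\<mu>\<in>II i. \<nu> \<noteq> \<mu> \<longrightarrow> (lt (sc i \<nu>) (sc i \<mu>) \<longleftrightarrow> lt \<nu> \<mu>)"
    \<comment> \<open>unions at limits\<close>
    and Ilim: "\<forall>\<delta>. isLimit r \<delta> \<longrightarrow> II \<delta> = (\<Union>i\<in>{i. ordlt r i \<delta>}. II i)"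
    \<comment> \<open>lt is a linear order on I\<close>
    and lin: "\<forall>x\<in>(\<Union>i. II i). \<forall>y\<in>(\<Union>i. II i). \<forall>z\<in>(\<Union>i. II i).
               \<not> lt x x \<and> (lt x y \<and> lt y z \<longrightarrow> lt x z) \<and> (lt x y \<or> x = y \<or> lt y x)"
  shows "nice r lt (\<Union>i. II i)"
proof -
  interpret I_construction r lt II emb sc
    by unfold_locales
      (fact card regular uncountable gamma_omega I0 emb_inj emb_ord Isucc sc_new sc_inj sc_below
        sc_cut sc_ord Ilim lin)+
  show ?thesis
    by (rule nice_if_rep_not_splits[OF kappa_rep_canonical_rep canonical_rep_not_splits])
qed

end
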